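(* Let $(\mathfrak g,[-,-])$ be a Lie algebra and let $\mathcal B$ be a nondegenerate commutative 2-cocycle on $(\mathfrak g,[-,-])$. Then there exists a (unique) bilinear operation $\circ:\mathfrak g\otimes\mathfrak g\to\mathfrak g$ satisfying $$\mathcal B(x\circ y,z)=\mathcal B(y,[x,z]),\qquad \forall x,y,z\in\mathfrak g,$$ and $(\mathfrak g,\circ)$ is a compatible anti-pre-Lie algebra structure on $(\mathfrak g,[-,-])$, i.e. $(\mathfrak g,\circ)$ is an anti-pre-Lie algebra and $x\circ y-y\circ x=[x,y]$ for all $x,y\in\mathfrak g$.
   Context: All vector spaces are finite-dimensional over a field $\mathbb F$ of characteristic $0$. A commutative 2-cocycle on a Lie algebra $(\mathfrak g,[-,-])$ is a symmetric bilinear form $\mathcal B$ on $\mathfrak g$ such that $\mathcal B([x,y],z)+\mathcal B([y,z],x)+\mathcal B([z,x],y)=0$ for all $x,y,z$. An anti-pre-Lie algebra is a vector space $A$ with a bilinear operation $\circ$ such that, writing $[x,y]=x\circ y-y\circ x$, for all $x,y,z\in A$: (i) $x\circ(y\circ z)-y\circ(x\circ z)=[y,x]\circ z$, and (ii) $[x,y]\circ z+[y,z]\circ x+[z,x]\circ y=0$. *)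

theory Defs
  imports Complex_Main
begin

definition fin_dim_vs :: "('k::field \<Rightarrow> 'v::ab_group_add \<Rightarrow> 'v) \<Rightarrow> bool" where
  "fin_dim_vs scale \<longleftrightarrow> (\<exists>Basis. finite_dimensional_vector_space scale Basis)"

definition bilinear_op :: "('k::field \<Rightarrow> 'v::ab_group_add \<Rightarrow> 'v) \<Rightarrow> ('v \<Rightarrow> 'v \<Rightarrow> 'v) \<Rightarrow> bool" where
  "bilinear_op scale f \<longleftrightarrow>
     (\<forall>x. Vector_Spaces.linear scale scale (f x)) \<and> (\<forall>y. Vector_Spaces.linear scale scale (\<lambda>x. f x y))"

definition bilinear_form :: "('k::field \<Rightarrow> 'v::ab_group_add \<Rightarrow> 'v) \<Rightarrow> ('v \<Rightarrow> 'v \<Rightarrow> 'k) \<Rightarrow> bool" where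
  "bilinear_form scale B \<longleftrightarrow>
     (\<forall>x. Vector_Spaces.linear scale (*) (B x)) \<and> (\<forall>y. Vector_Spaces.linear scale (*) (\<lambda>x. B x y))"

definition lie_algebra :: "('k::field \<Rightarrow> 'v::ab_group_add \<Rightarrow> 'v) \<Rightarrow> ('v \<Rightarrow> 'v \<Rightarrow> 'v) \<Rightarrow> bool" where
  "lie_algebra scale br \<longleftrightarrow> bilinear_op scale br \<and>
     (\<forall>x. br x x = 0) \<and>
     (\<forall>x y z. br x (br y z) + br y (br z x) + br z (br x y) = 0)"

definition commutative_2_cocycle :: "('k::field \<Rightarrow> 'v::ab_group_add \<Rightarrow> 'v) \<Rightarrow> ('v \<Rightarrow> 'v \<Rightarrow> 'v) \<Rightarrow> ('v \<Rightarrow> 'v \<Rightarrow> 'k) \<Rightarrow> bool" where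
  "commutative_2_cocycle scale br B \<longleftrightarrow> bilinear_form scale B \<and>
     (\<forall>x y. B x y = B y x) \<and>
     (\<forall>x y z. B (br x y) z + B (br y z) x + B (br z x) y = 0)"

definition nondegenerate :: "('v::ab_group_add \<Rightarrow> 'v \<Rightarrow> 'k::field) \<Rightarrow> bool" where
  "nondegenerate B \<longleftrightarrow> (\<forall>x. (\<forall>y. B x y = 0) \<longrightarrow> x = 0)"

definition anti_pre_lie :: "('k::field \<Rightarrow> 'v::ab_group_add \<Rightarrow> 'v) \<Rightarrow> ('v \<Rightarrow> 'v \<Rightarrow> 'v) \<Rightarrow> bool" where
  "anti_pre_lie scale op \<longleftrightarrow> bilinear_op scale op \<and>
     (let c = (\<lambda>x y. op x y - op y x) in
       (\<forall>x y z. op x (op y z) - op y (op x z) = op (c y x) z) \<and>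
       (\<forall>x y z. op (c x y) z + op (c y z) x + op (c z x) y = 0))"

end

theory Submission
  imports Defs
begin

text \<open>Nondegeneracy and finite dimension make every linear functional of the form \<open>B w\<close>, so
  \<open>x \<circ> y\<close> is the vector representing \<open>z \<mapsto> B y [x, z]\<close>; it is unique, and every property of
  \<open>\<circ>\<close> is checked after pairing with \<open>B\<close>. Compatibility \<open>x \<circ> y - y \<circ> x = [x, y]\<close> is the
  cocycle condition, identity (i) is the Jacobi identity in the form \<open>ad [y, x] = [ad y, ad x]\<close>,
  and identity (ii) says that the cyclic sum of \<open>B [[x, y], w] z\<close> vanishes. The cocycle condition
  on \<open>([x, y], w, z)\<close> together with Jacobi turns this cyclic sum into minus the cyclic sum of
  \<open>B [x, y] [w, z]\<close>, while the cocycle condition on \<open>(x, y, [w, z])\<close> together with the derivation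
  property of \<open>ad w\<close> turns it into plus the same sum; in characteristic 0 it is therefore 0.\<close>

lemma nondegenerate_eqI:
  assumes "nondegenerate B" "bilinear_form scale B" "\<And>z. B u z = B v z"
  shows "u = v"
proof -
  have "B (u - v) z = 0" for z
    using assms(2,3) module_hom.diff[of scale "(*)" "\<lambda>x. B x z"]
    unfolding bilinear_form_def module_hom_iff_linear by simp
  then have "u - v = 0"
    using assms(1) unfolding nondegenerate_def by blast
  then show ?thesis by simp
qed

lemma nondegenerate_represents_functional:
  fixes scale :: "'k::field \<Rightarrow> 'v::ab_group_add \<Rightarrow> 'v"
  assumes "fin_dim_vs scale" "bilinear_form scale B" "nondegenerate B"
    and f: "Vector_Spaces.linear scale (*) f"
  shows "\<exists>w. \<forall>y. B w y = f y"
proof -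
  obtain Basis where "finite_dimensional_vector_space scale Basis"
    using assms(1) unfolding fin_dim_vs_def by blast
  then interpret V: finite_dimensional_vector_space scale Basis .
  have B_left: "Vector_Spaces.linear scale (*) (\<lambda>x. B x y)"
    and B_right: "Vector_Spaces.linear scale (*) (B x)" for x y
    using assms(2) unfolding bilinear_form_def by blast+
  interpret vector_space_pair scale "(*) :: 'k \<Rightarrow> 'k \<Rightarrow> 'k"
    using f unfolding Vector_Spaces.linear_iff vector_space_pair_def by blast
  have represents_if_on_Basis: "B w y = f y" if "\<forall>b\<in>Basis. B w b = f b" for w y
    using linear_eq_on_span[OF B_right f] that V.span_Basis by blast
  have independent: "\<forall>b\<in>Basis. u b = 0" if "(\<Sum>b\<in>Basis. scale (u b) b) = 0" for u
    using that V.independent_Basis V.dependent_finite[OF V.finite_Basis] by blast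
  have coords_eq: "\<forall>b\<in>Basis. g b = h b"
    if "(\<Sum>b\<in>Basis. scale (g b) b) = (\<Sum>b\<in>Basis. scale (h b) b)" for g h
  proof -
    have "(\<Sum>b\<in>Basis. scale (g b - h b) b) = 0"
      using that by (simp add: V.scale_left_diff_distrib sum_subtractf)
    then have "\<forall>b\<in>Basis. g b - h b = 0" by (rule independent)
    then show ?thesis by simp
  qed
  \<comment> \<open>\<open>L\<close> is injective by nondegeneracy, hence onto; a preimage of \<open>\<Sum>b. f b \<cdot> b\<close> represents \<open>f\<close>.\<close>
  define L where "L v = (\<Sum>b\<in>Basis. scale (B v b) b)" for v
  have "Vector_Spaces.linear scale scale L"
    using B_left unfolding Vector_Spaces.linear_iff L_def
    by (simp add: V.scale_left_distrib sum.distrib V.scale_sum_right)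
  moreover have "inj L"
  proof (rule injI)
    fix u v
    assume "L u = L v"
    then have "\<forall>b\<in>Basis. B u b = B v b"
      unfolding L_def by (rule coords_eq)
    then have "B u z = B v z" for z
      using linear_eq_on_span[OF B_right B_right] V.span_Basis by blast
    then show "u = v"
      by (rule nondegenerate_eqI[OF assms(3,2)])
  qed
  ultimately obtain w where "L w = (\<Sum>b\<in>Basis. scale (f b) b)"
    using V.linear_inj_imp_surj by (metis surjD)
  then show ?thesis
    using coords_eq represents_if_on_Basis unfolding L_def by blast
qed

locale lie_algebra_comm_cocycle =
  fixes scale :: "'k::field_char_0 \<Rightarrow> 'v::ab_group_add \<Rightarrow> 'v"
    and br :: "'v \<Rightarrow> 'v \<Rightarrow> 'v"
    and B :: "'v \<Rightarrow> 'v \<Rightarrow> 'k"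
  assumes lie: "lie_algebra scale br"
    and cocycle: "commutative_2_cocycle scale br B"
begin

lemma bilinear_form: "bilinear_form scale B"
  using cocycle unfolding commutative_2_cocycle_def by blast

lemma vector_space: "vector_space scale"
  using lie unfolding lie_algebra_def bilinear_op_def Vector_Spaces.linear_iff by blast

lemma B_hom_left: "module_hom scale (*) (\<lambda>x. B x y)"
  and B_hom_right: "module_hom scale (*) (B x)"
  using bilinear_form unfolding bilinear_form_def module_hom_iff_linear by blast+

lemma br_hom_left: "module_hom scale scale (\<lambda>x. br x y)"
  and br_hom_right: "module_hom scale scale (br x)"
  using lie unfolding lie_algebra_def bilinear_op_def module_hom_iff_linear by blast+

lemmas B_add_left[simp] = module_hom.add[OF B_hom_left]
  and B_diff_left[simp] = module_hom.diff[OF B_hom_left]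
  and B_neg_left[simp] = module_hom.neg[OF B_hom_left]
  and B_scale_left[simp] = module_hom.scale[OF B_hom_left]
  and B_zero_left[simp] = module_hom.zero[OF B_hom_left]
  and B_add_right[simp] = module_hom.add[OF B_hom_right]
  and B_scale_right[simp] = module_hom.scale[OF B_hom_right]
  and br_add_left[simp] = module_hom.add[OF br_hom_left]
  and br_scale_left[simp] = module_hom.scale[OF br_hom_left]
  and br_add_right[simp] = module_hom.add[OF br_hom_right]
  and br_neg_right[simp] = module_hom.neg[OF br_hom_right]

lemma B_sym: "B x y = B y x"
  using cocycle unfolding commutative_2_cocycle_def by blast

lemma B_cocycle: "B (br x y) z + B (br y z) x + B (br z x) y = 0"
  using cocycle unfolding commutative_2_cocycle_def by blast

lemma br_jacobi: "br x (br y z) + br y (br z x) + br z (br x y) = 0"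
  using lie unfolding lie_algebra_def by blast

lemma br_anticomm: "br y x = - br x y"
proof -
  have "br (x + y) (x + y) = 0" "br x x = 0" "br y y = 0"
    using lie unfolding lie_algebra_def by blast+
  then have "br x y + br y x = 0"
    by (simp add: algebra_simps)
  then show ?thesis
    by (simp add: eq_neg_iff_add_eq_0 add.commute)
qed

lemma br_leibniz: "br x (br y z) = br (br x y) z + br y (br x z)"
proof -
  have "br y (br z x) = - br y (br x z)"
    using br_anticomm[of x z] by simp
  moreover have "br z (br x y) = - br (br x y) z"
    by (rule br_anticomm)
  ultimately have "br x (br y z) - br y (br x z) - br (br x y) z = 0"
    using br_jacobi[of x y z] by (simp add: algebra_simps)
  then show ?thesis
    by (simp add: algebra_simps)
qed

lemma B_cocycle_commutator: "B y (br x z) - B x (br y z) = B (br x y) z"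
proof -
  have "B y (br x z) = - B (br z x) y"
    using B_sym[of y "br x z"] br_anticomm[of z x] by simp
  moreover have "B x (br y z) = B (br y z) x"
    by (rule B_sym)
  ultimately show ?thesis
    using B_cocycle[of x y z] by algebra
qed

lemma B_cocycle_derivation:
  assumes derivation: "\<And>a b. D (br a b) = br (D a) b + br a (D b)"
  shows "B (br x y) (D z) + B (br y z) (D x) + B (br z x) (D y)
    = - (B (D (br x y)) z + B (D (br y z)) x + B (D (br z x)) y)"
  using B_cocycle[of x y "D z"] B_cocycle[of y z "D x"] B_cocycle[of z x "D y"]
  by (simp add: derivation) algebra

lemma B_cyclic_bracket_bracket:
  "B (br (br x y) w) z + B (br (br y z) w) x + B (br (br z x) w) y = 0"
    (is "?T = 0")
proof -
  have "B (br z (br x y) + br x (br y z) + br y (br z x)) w = 0"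
    unfolding br_jacobi by simp
  then have "B (br z (br x y)) w + B (br x (br y z)) w + B (br y (br z x)) w = 0"
    by simp
  then have "?T = - (B (br x y) (br w z) + B (br y z) (br w x) + B (br z x) (br w y))"
    using B_cocycle[of "br x y" w z] B_cocycle[of "br y z" w x] B_cocycle[of "br z x" w y]
      B_sym[of "br w z" "br x y"] B_sym[of "br w x" "br y z"] B_sym[of "br w y" "br z x"]
    by algebra
  also have "\<dots> = B (br w (br x y)) z + B (br w (br y z)) x + B (br w (br z x)) y"
    using B_cocycle_derivation[of "br w", OF br_leibniz] by simp
  also have "\<dots> = - ?T"
    using br_anticomm[of w] by simp
  finally have "?T + ?T = 0"
    by (simp only: eq_neg_iff_add_eq_0)
  then have "2 * ?T = 0"
    by (simp only: mult_2)
  then show ?thesis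
    by (metis mult_eq_0_iff zero_neq_numeral)
qed

lemma adjoint_product_exists:
  assumes "fin_dim_vs scale" "nondegenerate B"
  shows "\<exists>op. \<forall>x y z. B (op x y) z = B y (br x z)"
proof -
  have represented: "\<exists>w. \<forall>z. B w z = B y (br x z)" for x y
  proof -
    have "Vector_Spaces.linear scale (*) (B y \<circ> br x)"
      using Vector_Spaces.linear_compose br_hom_right B_hom_right
      unfolding module_hom_iff_linear by blast
    from nondegenerate_represents_functional[OF assms(1) bilinear_form assms(2) this]
    show ?thesis
      by simp
  qed
  define op where "op x y = (SOME w. \<forall>z. B w z = B y (br x z))" for x y
  have "\<forall>z. B (op x y) z = B y (br x z)" for x y
    unfolding op_def by (rule someI_ex) (rule represented)
  then show ?thesis
    by blast
qed

end

locale comm_cocycle_adjoint_product = lie_algebra_comm_cocycle +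
  fixes op :: "'v::ab_group_add \<Rightarrow> 'v \<Rightarrow> 'v"
  assumes nondegenerate: "nondegenerate B"
    and adjoint: "B (op x y) z = B y (br x z)"
begin

lemma B_eqI: "(\<And>z. B u z = B v z) \<Longrightarrow> u = v"
  using nondegenerate_eqI[OF nondegenerate bilinear_form] .

lemma op_commutator: "op x y - op y x = br x y"
  by (rule B_eqI) (simp add: adjoint B_cocycle_commutator)

lemma bilinear_op: "bilinear_op scale op"
  unfolding bilinear_op_def Vector_Spaces.linear_iff
  by (intro conjI allI vector_space; rule B_eqI; simp add: adjoint)

lemma op_left_symmetric: "op x (op y z) - op y (op x z) = op (br y x) z"
  by (rule B_eqI) (simp add: adjoint br_leibniz[of y x])

lemma op_cyclic_commutator: "op (br x y) z + op (br y z) x + op (br z x) y = 0"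
  by (rule B_eqI) (simp add: adjoint B_sym[of _ "br _ _"] B_cyclic_bracket_bracket)

lemma anti_pre_lie: "anti_pre_lie scale op"
  unfolding anti_pre_lie_def Let_def op_commutator
  using bilinear_op op_left_symmetric op_cyclic_commutator by blast

end

theorem theorem2p19:
  fixes scale :: "'k::field_char_0 \<Rightarrow> 'v::ab_group_add \<Rightarrow> 'v"
    and br :: "'v \<Rightarrow> 'v \<Rightarrow> 'v"
    and B :: "'v \<Rightarrow> 'v \<Rightarrow> 'k"
  assumes "vector_space scale"
    and "fin_dim_vs scale"
    and "lie_algebra scale br"
    and "commutative_2_cocycle scale br B"
    and "nondegenerate B"
  shows "(\<exists>op. bilinear_op scale op \<and>
              (\<forall>x y z. B (op x y) z = B y (br x z)) \<and>
              anti_pre_lie scale op \<and>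
              (\<forall>x y. op x y - op y x = br x y)) \<and>
         (\<forall>op1 op2. (\<forall>x y z. B (op1 x y) z = B y (br x z)) \<and>
                    (\<forall>x y z. B (op2 x y) z = B y (br x z)) \<longrightarrow> op1 = op2)"
proof -
  interpret lie_algebra_comm_cocycle scale br B
    using assms(3,4) by unfold_locales
  obtain op where adjoint: "\<And>x y z. B (op x y) z = B y (br x z)"
    using adjoint_product_exists[OF assms(2,5)] by blast
  interpret comm_cocycle_adjoint_product scale br B op
    using assms(5) adjoint by unfold_locales
  have "op1 = op2"
    if "\<forall>x y z. B (op1 x y) z = B y (br x z)" "\<forall>x y z. B (op2 x y) z = B y (br x z)"
    for op1 op2
    using that by (auto intro!: ext B_eqI)
  then show ?thesis
    using bilinear_op adjoint anti_pre_lie op_commutator by blast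
qed

end
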